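(* Let $Q$ be a tree quiver, let $(M,x)$ be a radiation module such that $M$ is exceptional, and let $\mathcal B=\mathcal B(M,x)$ be a radiation basis. Let $y,z\in Q_0$ be neighbors with $d(x,y)+1=d(x,z)$. Then in the coefficient quiver $\Gamma(M,\mathcal B)$ every element of $\mathcal B_z$ is joined by an arrow to precisely one element of $\mathcal B_y$. If $\dim M_y\le\dim M_z$, then every element of $\mathcal B_y$ is joined by an arrow to at least one element of $\mathcal B_z$. If $\dim M_y\ge \dim M_z$, then every element of $\mathcal B_y$ is joined by an arrow to at most one element of $\mathcal B_z$.
   Context: $k$ is a field; $Q$ is a locally finite quiver whose underlying graph is a tree; $d(u,v)$ is the distance of vertices in the underlying graph; representations are finite-dimensional. A representation $M$ is exceptional if it is indecomposable and $\operatorname{Ext}^1(M,M)=0$. $S(x)$ is the simple at $x$; $Q^x$ is $Q$ with $x$ and arrows at $x$ deleted; restriction to $Q^x$ forgets $M_x$ and the maps of arrows at $x$. Coefficient quiver: for bases $\mathcal B_z$ of $M_z$, $\Gamma(M,\mathcal B)$ has vertex set the disjoint union of the $\mathcal B_z$; for an arrow $\alpha\colon u\to w$ and $b\in\mathcal B_u$ write $M_\alpha(b)=\sum_{b'\in\mathcal B_w}c_{b'b}b'$; there is an arrow $b\to b'$ labelled $\alpha$ iff $c_{b'b}\ne0$. Radiation modules (recursive): pairs $(M,x)$, $M$ indecomposable, $\dim M_x=1$. $(S(x),x)$ is one. If $M$ has length $\ge 2$, $(M,x)$ is one if the restriction of $M$ to $Q^x$ is $\bigoplus_i N(i)$ with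 $N(i)$ indecomposable, $\operatorname{Hom}(N(i),N(j))=0$ for $i\ne j$, and for each $i$ a neighbor $y(i)$ of $x$ with $(N(i),y(i))$ a radiation module. Radiation basis containing nonzero $b\in M_x$ (recursive): for $S(x)$ it is $\{b\}$; otherwise fix such a decomposition, let $\alpha_i$ be the arrow between $x$ and $y(i)$; if $\alpha_i\colon x\to y(i)$ let $b_i$ be the $N(i)_{y(i)}$-component of $M_{\alpha_i}(b)$ in $M_{y(i)}=\bigoplus_jN(j)_{y(i)}$; if $\alpha_i\colon y(i)\to x$ let $b_i\in N(i)_{y(i)}$ with $M_{\alpha_i}(b_i)=b$; then $\mathcal B(M,x)=\{b\}\cup\bigcup_i\mathcal B(N(i),y(i))$ with $\mathcal B(N(i),y(i))$ a radiation basis of $(N(i),y(i))$ containing $b_i$. $\mathcal B_z$ denotes the elements lying in $M_z$. *)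

theory Defs
  imports Complex_Main
begin

section \<open>Quivers (vertices = UNIV :: 'v set, arrows = UNIV :: 'a set)\<close>

definition adj :: "('a \<Rightarrow> 'v) \<Rightarrow> ('a \<Rightarrow> 'v) \<Rightarrow> 'v \<Rightarrow> 'v \<Rightarrow> bool" where
  "adj src tgt u v \<longleftrightarrow> (\<exists>\<alpha>. (src \<alpha> = u \<and> tgt \<alpha> = v) \<or> (src \<alpha> = v \<and> tgt \<alpha> = u))"

definition walk :: "('a \<Rightarrow> 'v) \<Rightarrow> ('a \<Rightarrow> 'v) \<Rightarrow> 'v list \<Rightarrow> 'v \<Rightarrow> 'v \<Rightarrow> bool" where
  "walk src tgt p u v \<longleftrightarrow> p \<noteq> [] \<and> hd p = u \<and> last p = v \<and>
     (\<forall>i. Suc i < length p \<longrightarrow> adj src tgt (p ! i) (p ! Suc i))"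

definition dist_q :: "('a \<Rightarrow> 'v) \<Rightarrow> ('a \<Rightarrow> 'v) \<Rightarrow> 'v \<Rightarrow> 'v \<Rightarrow> nat" where
  "dist_q src tgt u v = (LEAST n. \<exists>p. walk src tgt p u v \<and> length p = Suc n)"

definition locally_finite_quiver :: "('a \<Rightarrow> 'v) \<Rightarrow> ('a \<Rightarrow> 'v) \<Rightarrow> bool" where
  "locally_finite_quiver src tgt \<longleftrightarrow> (\<forall>v. finite {\<alpha>. src \<alpha> = v \<or> tgt \<alpha> = v})"

definition tree_quiver :: "('a \<Rightarrow> 'v) \<Rightarrow> ('a \<Rightarrow> 'v) \<Rightarrow> bool" where
  "tree_quiver src tgt \<longleftrightarrow>
     (\<forall>\<alpha>. src \<alpha> \<noteq> tgt \<alpha>) \<and>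
     (\<forall>\<alpha> \<beta>. \<alpha> \<noteq> \<beta> \<longrightarrow> {src \<alpha>, tgt \<alpha>} \<noteq> {src \<beta>, tgt \<beta>}) \<and>
     (\<forall>u v. \<exists>p. walk src tgt p u v) \<and>
     (\<forall>u v p q. walk src tgt p u v \<and> distinct p \<and> walk src tgt q u v \<and> distinct q \<longrightarrow> p = q)"

text \<open>A representation is a family of subspaces V z of an ambient k-vector space 'w
  together with maps F \<alpha> (only their values on V (src \<alpha>) matter).\<close>

definition lin_on :: "('k::field \<Rightarrow> 'w::ab_group_add \<Rightarrow> 'w) \<Rightarrow> 'w set \<Rightarrow> 'w set \<Rightarrow> ('w \<Rightarrow> 'w) \<Rightarrow> bool" where
  "lin_on scale S T f \<longleftrightarrow> f ` S \<subseteq> T \<and> (\<forall>u\<in>S. \<forall>v\<in>S. f (u + v) = f u + f v) \<and>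
     (\<forall>c. \<forall>v\<in>S. f (scale c v) = scale c (f v))"

definition fin_dim_subspace :: "('k::field \<Rightarrow> 'w::ab_group_add \<Rightarrow> 'w) \<Rightarrow> 'w set \<Rightarrow> bool" where
  "fin_dim_subspace scale S \<longleftrightarrow> module.subspace scale S \<and>
     (\<exists>B. finite B \<and> B \<subseteq> S \<and> module.span scale B = S)"

definition is_rep :: "('k::field \<Rightarrow> 'w::ab_group_add \<Rightarrow> 'w) \<Rightarrow> ('a \<Rightarrow> 'v) \<Rightarrow> ('a \<Rightarrow> 'v)
    \<Rightarrow> ('v \<Rightarrow> 'w set) \<Rightarrow> ('a \<Rightarrow> 'w \<Rightarrow> 'w) \<Rightarrow> bool" where
  "is_rep scale src tgt V F \<longleftrightarrow> (\<forall>z. fin_dim_subspace scale (V z)) \<and>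
     finite {z. V z \<noteq> {0}} \<and> (\<forall>\<alpha>. lin_on scale (V (src \<alpha>)) (V (tgt \<alpha>)) (F \<alpha>))"

definition is_subrep :: "('k::field \<Rightarrow> 'w::ab_group_add \<Rightarrow> 'w) \<Rightarrow> ('a \<Rightarrow> 'v) \<Rightarrow> ('a \<Rightarrow> 'v)
    \<Rightarrow> ('v \<Rightarrow> 'w set) \<Rightarrow> ('a \<Rightarrow> 'w \<Rightarrow> 'w) \<Rightarrow> ('v \<Rightarrow> 'w set) \<Rightarrow> bool" where
  "is_subrep scale src tgt V F U \<longleftrightarrow>
     (\<forall>z. module.subspace scale (U z) \<and> U z \<subseteq> V z) \<and> (\<forall>\<alpha>. F \<alpha> ` U (src \<alpha>) \<subseteq> U (tgt \<alpha>))"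

definition zero_rep :: "('v \<Rightarrow> 'w::zero set) \<Rightarrow> bool" where
  "zero_rep V \<longleftrightarrow> (\<forall>z. V z = {0})"

definition is_decomp :: "('k::field \<Rightarrow> 'w::ab_group_add \<Rightarrow> 'w) \<Rightarrow> ('a \<Rightarrow> 'v) \<Rightarrow> ('a \<Rightarrow> 'v)
    \<Rightarrow> ('v \<Rightarrow> 'w set) \<Rightarrow> ('a \<Rightarrow> 'w \<Rightarrow> 'w) \<Rightarrow> nat \<Rightarrow> (nat \<Rightarrow> 'v \<Rightarrow> 'w set) \<Rightarrow> bool" where
  "is_decomp scale src tgt V F n N \<longleftrightarrow>
     (\<forall>i<n. is_subrep scale src tgt V F (N i)) \<and>
     (\<forall>z. \<forall>v\<in>V z. \<exists>!u. (\<forall>i<n. u i \<in> N i z) \<and> (\<forall>i\<ge>n. u i = 0) \<and> v = (\<Sum>i<n. u i))"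

definition indecomposable :: "('k::field \<Rightarrow> 'w::ab_group_add \<Rightarrow> 'w) \<Rightarrow> ('a \<Rightarrow> 'v) \<Rightarrow> ('a \<Rightarrow> 'v)
    \<Rightarrow> ('v \<Rightarrow> 'w set) \<Rightarrow> ('a \<Rightarrow> 'w \<Rightarrow> 'w) \<Rightarrow> bool" where
  "indecomposable scale src tgt V F \<longleftrightarrow> is_rep scale src tgt V F \<and> \<not> zero_rep V \<and>
     (\<forall>N. is_decomp scale src tgt V F 2 N \<longrightarrow> zero_rep (N 0) \<or> zero_rep (N 1))"

definition is_hom :: "('k::field \<Rightarrow> 'w::ab_group_add \<Rightarrow> 'w) \<Rightarrow> ('a \<Rightarrow> 'v) \<Rightarrow> ('a \<Rightarrow> 'v)
    \<Rightarrow> ('v \<Rightarrow> 'w set) \<Rightarrow> ('a \<Rightarrow> 'w \<Rightarrow> 'w) \<Rightarrow> ('v \<Rightarrow> 'w set) \<Rightarrow> ('a \<Rightarrow> 'w \<Rightarrow> 'w)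
    \<Rightarrow> ('v \<Rightarrow> 'w \<Rightarrow> 'w) \<Rightarrow> bool" where
  "is_hom scale src tgt V1 F1 V2 F2 h \<longleftrightarrow> (\<forall>z. lin_on scale (V1 z) (V2 z) (h z)) \<and>
     (\<forall>\<alpha>. \<forall>v\<in>V1 (src \<alpha>). h (tgt \<alpha>) (F1 \<alpha> v) = F2 \<alpha> (h (src \<alpha>) v))"

definition hom_zero :: "('k::field \<Rightarrow> 'w::ab_group_add \<Rightarrow> 'w) \<Rightarrow> ('a \<Rightarrow> 'v) \<Rightarrow> ('a \<Rightarrow> 'v)
    \<Rightarrow> ('v \<Rightarrow> 'w set) \<Rightarrow> ('a \<Rightarrow> 'w \<Rightarrow> 'w) \<Rightarrow> ('v \<Rightarrow> 'w set) \<Rightarrow> ('a \<Rightarrow> 'w \<Rightarrow> 'w) \<Rightarrow> bool" where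
  "hom_zero scale src tgt V1 F1 V2 F2 \<longleftrightarrow>
     (\<forall>h. is_hom scale src tgt V1 F1 V2 F2 h \<longrightarrow> (\<forall>z. \<forall>v\<in>V1 z. h z v = 0))"

text \<open>Ext^1(M,M) = 0, via Ringel's standard exact sequence for path algebras
  0 \<rightarrow> Hom(M,N) \<rightarrow> \<Oplus>_z Hom(M_z,N_z) \<rightarrow> \<Oplus>_\<alpha> Hom(M_{s\<alpha>},N_{t\<alpha>}) \<rightarrow> Ext^1(M,N) \<rightarrow> 0:
  the middle map is surjective.\<close>
definition ext1_zero :: "('k::field \<Rightarrow> 'w::ab_group_add \<Rightarrow> 'w) \<Rightarrow> ('a \<Rightarrow> 'v) \<Rightarrow> ('a \<Rightarrow> 'v)
    \<Rightarrow> ('v \<Rightarrow> 'w set) \<Rightarrow> ('a \<Rightarrow> 'w \<Rightarrow> 'w) \<Rightarrow> bool" where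
  "ext1_zero scale src tgt V F \<longleftrightarrow>
     (\<forall>g. (\<forall>\<alpha>. lin_on scale (V (src \<alpha>)) (V (tgt \<alpha>)) (g \<alpha>)) \<longrightarrow>
        (\<exists>h. (\<forall>z. lin_on scale (V z) (V z) (h z)) \<and>
             (\<forall>\<alpha>. \<forall>v\<in>V (src \<alpha>). g \<alpha> v = h (tgt \<alpha>) (F \<alpha> v) - F \<alpha> (h (src \<alpha>) v))))"

definition exceptional :: "('k::field \<Rightarrow> 'w::ab_group_add \<Rightarrow> 'w) \<Rightarrow> ('a \<Rightarrow> 'v) \<Rightarrow> ('a \<Rightarrow> 'v)
    \<Rightarrow> ('v \<Rightarrow> 'w set) \<Rightarrow> ('a \<Rightarrow> 'w \<Rightarrow> 'w) \<Rightarrow> bool" where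
  "exceptional scale src tgt V F \<longleftrightarrow>
     indecomposable scale src tgt V F \<and> ext1_zero scale src tgt V F"

text \<open>Restriction to Q^x, modelled as the representation of Q with zero space at x
  and zero maps on the arrows incident to x.\<close>
definition restr_sp :: "('v \<Rightarrow> 'w::zero set) \<Rightarrow> 'v \<Rightarrow> 'v \<Rightarrow> 'w set" where
  "restr_sp V x = V(x := {0})"

definition restr_map :: "('a \<Rightarrow> 'v) \<Rightarrow> ('a \<Rightarrow> 'v) \<Rightarrow> ('a \<Rightarrow> 'w::zero \<Rightarrow> 'w) \<Rightarrow> 'v \<Rightarrow> 'a \<Rightarrow> 'w \<Rightarrow> 'w" where
  "restr_map src tgt F x = (\<lambda>\<alpha>. if src \<alpha> = x \<or> tgt \<alpha> = x then (\<lambda>_. 0) else F \<alpha>)"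

inductive radiation :: "('k::field \<Rightarrow> 'w::ab_group_add \<Rightarrow> 'w) \<Rightarrow> ('a \<Rightarrow> 'v) \<Rightarrow> ('a \<Rightarrow> 'v)
    \<Rightarrow> ('v \<Rightarrow> 'w set) \<Rightarrow> ('a \<Rightarrow> 'w \<Rightarrow> 'w) \<Rightarrow> 'v \<Rightarrow> bool"
  for scale src tgt where
  simple: "\<lbrakk> is_rep scale src tgt V F; vector_space.dim scale (V x) = 1; \<forall>z. z \<noteq> x \<longrightarrow> V z = {0} \<rbrakk>
     \<Longrightarrow> radiation scale src tgt V F x"
| step: "\<lbrakk> indecomposable scale src tgt V F; vector_space.dim scale (V x) = 1;
     \<exists>z. z \<noteq> x \<and> V z \<noteq> {0};
     is_decomp scale src tgt (restr_sp V x) (restr_map src tgt F x) n N;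
     \<forall>i<n. indecomposable scale src tgt (N i) (restr_map src tgt F x);
     \<forall>i<n. \<forall>j<n. i \<noteq> j \<longrightarrow>
        hom_zero scale src tgt (N i) (restr_map src tgt F x) (N j) (restr_map src tgt F x);
     \<forall>i<n. adj src tgt x (y i) \<and> radiation scale src tgt (N i) (restr_map src tgt F x) (y i) \<rbrakk>
     \<Longrightarrow> radiation scale src tgt V F x"

text \<open>rad_basis scale src tgt V F x b B: B is a radiation basis of (V,F,x) containing b,
  where B z is the set of basis elements lying in V z.\<close>
inductive rad_basis :: "('k::field \<Rightarrow> 'w::ab_group_add \<Rightarrow> 'w) \<Rightarrow> ('a \<Rightarrow> 'v) \<Rightarrow> ('a \<Rightarrow> 'v)
    \<Rightarrow> ('v \<Rightarrow> 'w set) \<Rightarrow> ('a \<Rightarrow> 'w \<Rightarrow> 'w) \<Rightarrow> 'v \<Rightarrow> 'w \<Rightarrow> ('v \<Rightarrow> 'w set) \<Rightarrow> bool"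
  for scale src tgt where
  simple: "\<lbrakk> is_rep scale src tgt V F; vector_space.dim scale (V x) = 1; \<forall>z. z \<noteq> x \<longrightarrow> V z = {0};
     b \<in> V x; b \<noteq> 0 \<rbrakk>
     \<Longrightarrow> rad_basis scale src tgt V F x b (\<lambda>z. if z = x then {b} else {})"
| step: "\<lbrakk> indecomposable scale src tgt V F; vector_space.dim scale (V x) = 1;
     \<exists>z. z \<noteq> x \<and> V z \<noteq> {0}; b \<in> V x; b \<noteq> 0;
     is_decomp scale src tgt (restr_sp V x) (restr_map src tgt F x) n N;
     \<forall>i<n. indecomposable scale src tgt (N i) (restr_map src tgt F x);
     \<forall>i<n. \<forall>j<n. i \<noteq> j \<longrightarrow>
        hom_zero scale src tgt (N i) (restr_map src tgt F x) (N j) (restr_map src tgt F x);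
     \<forall>i<n. adj src tgt x (y i) \<and> radiation scale src tgt (N i) (restr_map src tgt F x) (y i);
     \<forall>i<n. \<forall>\<alpha>. src \<alpha> = x \<and> tgt \<alpha> = y i \<longrightarrow>
        (\<exists>u. (\<forall>j<n. u j \<in> N j (y i)) \<and> F \<alpha> b = (\<Sum>j<n. u j) \<and> bb i = u i);
     \<forall>i<n. \<forall>\<alpha>. src \<alpha> = y i \<and> tgt \<alpha> = x \<longrightarrow> bb i \<in> N i (y i) \<and> F \<alpha> (bb i) = b;
     \<forall>i<n. rad_basis scale src tgt (N i) (restr_map src tgt F x) (y i) (bb i) (BB i) \<rbrakk>
     \<Longrightarrow> rad_basis scale src tgt V F x b
           (\<lambda>z. (if z = x then {b} else {}) \<union> (\<Union>i<n. BB i z))"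

definition coeff_arrow :: "('k::field \<Rightarrow> 'w::ab_group_add \<Rightarrow> 'w) \<Rightarrow> ('a \<Rightarrow> 'v) \<Rightarrow> ('a \<Rightarrow> 'v)
    \<Rightarrow> ('a \<Rightarrow> 'w \<Rightarrow> 'w) \<Rightarrow> ('v \<Rightarrow> 'w set) \<Rightarrow> 'a \<Rightarrow> 'v \<times> 'w \<Rightarrow> 'v \<times> 'w \<Rightarrow> bool" where
  "coeff_arrow scale src tgt F B \<alpha> p q \<longleftrightarrow>
     fst p = src \<alpha> \<and> fst q = tgt \<alpha> \<and> snd p \<in> B (fst p) \<and> snd q \<in> B (fst q) \<and>
     module.representation scale (B (tgt \<alpha>)) (F \<alpha> (snd p)) (snd q) \<noteq> 0"

definition joined :: "('k::field \<Rightarrow> 'w::ab_group_add \<Rightarrow> 'w) \<Rightarrow> ('a \<Rightarrow> 'v) \<Rightarrow> ('a \<Rightarrow> 'v)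
    \<Rightarrow> ('a \<Rightarrow> 'w \<Rightarrow> 'w) \<Rightarrow> ('v \<Rightarrow> 'w set) \<Rightarrow> 'v \<times> 'w \<Rightarrow> 'v \<times> 'w \<Rightarrow> bool" where
  "joined scale src tgt F B p q \<longleftrightarrow>
     (\<exists>\<alpha>. coeff_arrow scale src tgt F B \<alpha> p q \<or> coeff_arrow scale src tgt F B \<alpha> q p)"

end

(*
  Every basis vector c at z has exactly one neighbour at y in the coefficient quiver, its
  parent: along the recursive construction of the radiation basis, the vectors next to the root
  are the components of the image of b or preimages of b, and all other edges are inherited from
  the summands N(i), whose bases avoid x. Since Ext^1(M, M) = 0, the map M_alpha along the edge
  between y and z has maximal rank. If alpha points from y to z, a parent without children makes
  M_alpha non-injective and two children of one parent make it non-surjective; if alpha points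
  from z to y, the roles of injectivity and surjectivity are exchanged. Hence the parent map
  from B_z to B_y is injective or surjective, and counting with dim M_y and dim M_z gives the
  remaining two claims.
*)
theory Submission
  imports Defs
begin

section \<open>Walks and distances in tree quivers\<close>

lemma walk_iff_successively:
  "walk src tgt p u v \<longleftrightarrow> p \<noteq> [] \<and> hd p = u \<and> last p = v \<and> successively (adj src tgt) p"
  unfolding walk_def successively_conv_nth by blast

lemma adj_sym: "adj src tgt u v \<Longrightarrow> adj src tgt v u"
  by (auto simp: adj_def)

lemma walk_Nil [simp]: "\<not> walk src tgt [] u v"
  by (simp add: walk_iff_successively)

lemma walk_Cons_Cons [simp]:
  "walk src tgt (a # w # p) u v \<longleftrightarrow> a = u \<and> adj src tgt u w \<and> walk src tgt (w # p) w v"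
  by (auto simp: walk_iff_successively)

lemma walk_Cons_hd: "walk src tgt p u v \<Longrightarrow> \<exists>p'. p = u # p'"
  by (cases p) (auto simp: walk_iff_successively)

lemma walk_ConsI: "adj src tgt u w \<Longrightarrow> walk src tgt p w v \<Longrightarrow> walk src tgt (u # p) u v"
  by (metis walk_Cons_Cons walk_Cons_hd)

lemma walk_snoc: "walk src tgt p u w \<Longrightarrow> adj src tgt w v \<Longrightarrow> walk src tgt (p @ [v]) u v"
  by (auto simp: walk_iff_successively successively_append_iff)

lemma walk_shortcut:
  assumes "walk src tgt p u v" "\<not> distinct p"
  obtains q where "walk src tgt q u v" "length q < length p" "set q \<subseteq> set p"
proof -
  obtain xs ys zs w where p: "p = xs @ [w] @ ys @ [w] @ zs"
    using not_distinct_decomp[OF assms(2)] by blast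
  have "walk src tgt (xs @ [w] @ zs) u v"
    using assms(1) unfolding p walk_iff_successively
    by (auto simp: successively_append_iff successively_Cons hd_append last_append)
  then show thesis by (rule that) (auto simp: p)
qed

lemma walk_distinct:
  assumes "walk src tgt p u v"
  obtains q where "walk src tgt q u v" "distinct q" "set q \<subseteq> set p"
  using assms
proof (induction "length p" arbitrary: p thesis rule: less_induct)
  case less
  show ?case
  proof (cases "distinct p")
    case False
    then obtain q where "walk src tgt q u v" "length q < length p" "set q \<subseteq> set p"
      using walk_shortcut[OF less.prems(2)] by blast
    moreover obtain r where "walk src tgt r u v" "distinct r" "set r \<subseteq> set q"
      using less.hyps[OF \<open>length q < length p\<close> _ \<open>walk src tgt q u v\<close>] by blast
    ultimately show ?thesis using less.prems(1) by blast
  qed (use less.prems in blast)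
qed

lemma dist_q_less_length: "walk src tgt p u v \<Longrightarrow> dist_q src tgt u v < length p"
proof -
  assume w: "walk src tgt p u v"
  then obtain n where n: "length p = Suc n" by (cases p) auto
  then have "dist_q src tgt u v \<le> n"
    unfolding dist_q_def using w by (blast intro: Least_le)
  then show ?thesis using n by simp
qed

lemma shortest_walk_exists:
  assumes "tree_quiver src tgt"
  obtains p where "walk src tgt p u v" "length p = Suc (dist_q src tgt u v)"
proof -
  obtain p where "walk src tgt p u v" using assms unfolding tree_quiver_def by blast
  then have "walk src tgt p u v \<and> length p = Suc (length p - 1)" by (cases p) simp_all
  then have "\<exists>n p. walk src tgt p u v \<and> length p = Suc n" by blast
  then have "\<exists>p. walk src tgt p u v \<and> length p = Suc (dist_q src tgt u v)"
    unfolding dist_q_def by (rule LeastI_ex)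
  then show thesis using that by blast
qed

lemma dist_q_self [simp]: "dist_q src tgt u u = 0"
  using dist_q_less_length[of src tgt "[u]" u u] by (simp add: walk_def)

lemma dist_q_eq_0_iff:
  assumes "tree_quiver src tgt"
  shows "dist_q src tgt u v = 0 \<longleftrightarrow> u = v"
proof
  assume "dist_q src tgt u v = 0"
  then obtain p where p: "walk src tgt p u v" "length p = Suc 0"
    using shortest_walk_exists[OF assms] by metis
  then obtain w where "p = [w]" by (auto simp: length_Suc_conv)
  then show "u = v" using p(1) by (auto simp: walk_iff_successively)
qed simp

lemma shortest_walk_distinct:
  assumes "walk src tgt p u v" "length p = Suc (dist_q src tgt u v)"
  shows "distinct p"
proof (rule ccontr)
  assume "\<not> distinct p"
  then obtain q where "walk src tgt q u v" "length q < length p"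
    using walk_shortcut[OF assms(1)] by blast
  then show False using dist_q_less_length[of src tgt q u v] assms(2) by simp
qed

text \<open>Since simple paths in a tree are unique, a walk from a neighbour \<open>w\<close> of \<open>x\<close> that
  avoids \<open>x\<close> extends to the shortest walk from \<open>x\<close>.\<close>
lemma dist_q_through_neighbour:
  assumes tree: "tree_quiver src tgt" and adj: "adj src tgt x w"
    and walk: "walk src tgt p w v" and avoid: "x \<notin> set p"
  shows "dist_q src tgt x v = dist_q src tgt w v + 1"
proof -
  obtain q where q: "walk src tgt q w v" "distinct q" "x \<notin> set q"
    using walk_distinct[OF walk] avoid by blast
  obtain r where r: "walk src tgt r x v" "length r = Suc (dist_q src tgt x v)"
    using shortest_walk_exists[OF tree] by blast
  have "r = x # q"
    using tree shortest_walk_distinct[OF r] walk_ConsI[OF adj q(1)] q(2,3) r(1)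
    unfolding tree_quiver_def by (meson distinct.simps(2))
  then have "dist_q src tgt w v < dist_q src tgt x v"
    using dist_q_less_length[OF q(1)] r(2) by simp
  moreover obtain s where s: "walk src tgt s w v" "length s = Suc (dist_q src tgt w v)"
    using shortest_walk_exists[OF tree] by blast
  then have "dist_q src tgt x v < Suc (Suc (dist_q src tgt w v))"
    using dist_q_less_length[OF walk_ConsI[OF adj s(1)]] by simp
  ultimately show ?thesis by simp
qed

section \<open>Linear algebra in subspaces\<close>

context vector_space
begin

lemma lin_on_zero:
  assumes "lin_on scale S T f" "subspace S"
  shows "f 0 = 0"
proof -
  have "f (0 + 0) = f 0 + f 0"
    using assms subspace_0 unfolding lin_on_def by blast
  then show ?thesis by simp
qed

lemma lin_on_image_subset_subspace:
  assumes f: "lin_on scale (span P) T f" and U: "subspace U" and PU: "f ` P \<subseteq> U"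
  shows "f ` span P \<subseteq> U"
proof -
  have "subspace {u \<in> span P. f u \<in> U}"
    using U lin_on_zero[OF f subspace_span] f unfolding subspace_def lin_on_def
    by (auto simp: span_zero span_add span_scale)
  then have "span P \<subseteq> {u \<in> span P. f u \<in> U}"
    using PU by (intro span_minimal) (auto intro: span_base)
  then show ?thesis by blast
qed

lemma subspace_representation_relation:
  assumes Q: "independent Q"
  shows "subspace {w \<in> span Q. a * representation Q w q1 = c * representation Q w q2}"
  unfolding subspace_def
proof (intro conjI ballI allI)
  show "0 \<in> {w \<in> span Q. a * representation Q w q1 = c * representation Q w q2}"
    by (simp add: span_zero representation_zero)
next
  fix u v
  assume "u \<in> {w \<in> span Q. a * representation Q w q1 = c * representation Q w q2}"
    and "v \<in> {w \<in> span Q. a * representation Q w q1 = c * representation Q w q2}"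
  then show "u + v \<in> {w \<in> span Q. a * representation Q w q1 = c * representation Q w q2}"
    by (simp add: span_add representation_add[OF Q] distrib_left)
next
  fix r u
  assume "u \<in> {w \<in> span Q. a * representation Q w q1 = c * representation Q w q2}"
  then show "r *s u \<in> {w \<in> span Q. a * representation Q w q1 = c * representation Q w q2}"
    by (simp add: span_scale representation_scale[OF Q] mult.left_commute)
qed

lemma eq_0_if_representation_eq_0:
  assumes "independent Q" "w \<in> span Q" "\<And>q. q \<in> Q \<Longrightarrow> representation Q w q = 0"
  shows "w = 0"
proof -
  have "{q. representation Q w q \<noteq> 0} = {}"
    using assms representation_ne_zero by blast
  then show ?thesis using sum_nonzero_representation_eq[OF assms(1,2)] by simp
qed

lemma eq_scale_if_representation_supported:
  assumes "independent Q" "w \<in> span Q" "q \<in> Q"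
    and "\<And>q'. q' \<in> Q \<Longrightarrow> q' \<noteq> q \<Longrightarrow> representation Q w q' = 0"
  shows "w = representation Q w q *s q"
proof -
  have "{q'. representation Q w q' \<noteq> 0} \<subseteq> {q}"
    using assms representation_ne_zero by blast
  then have "(\<Sum>q' | representation Q w q' \<noteq> 0. representation Q w q' *s q') =
      (\<Sum>q'\<in>{q}. representation Q w q' *s q')"
    by (intro sum.mono_neutral_left) auto
  then show ?thesis using sum_nonzero_representation_eq[OF assms(1,2)] by simp
qed

lemma subset_span_singleton_if_dim_1:
  assumes "dim S = 1" "b \<in> S" "b \<noteq> 0"
  shows "S \<subseteq> span {b}"
proof -
  obtain E where E: "{b} \<subseteq> E" "E \<subseteq> S" "independent E" "S \<subseteq> span E"
    using maximal_independent_subset_extend[of "{b}" S] assms by auto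
  have "card E = 1" using basis_card_eq_dim[OF E(2,4,3)] assms(1) by simp
  then have "E = {b}" using E(1) by (auto simp: card_1_singleton_iff)
  then show ?thesis using E(4) by simp
qed

lemma is_decomp_summand:
  assumes "is_decomp scale src tgt V F n N" "i < n"
  shows "subspace (N i z)" "N i z \<subseteq> V z" "F \<alpha> ` N i (src \<alpha>) \<subseteq> N i (tgt \<alpha>)"
  using assms unfolding is_decomp_def is_subrep_def by simp_all

lemma is_decomp_exists:
  assumes "is_decomp scale src tgt V F n N" "v \<in> V z"
  obtains u where "\<forall>i<n. u i \<in> N i z" "v = (\<Sum>i<n. u i)"
proof -
  have "\<exists>!u. (\<forall>i<n. u i \<in> N i z) \<and> (\<forall>i\<ge>n. u i = 0) \<and> v = (\<Sum>i<n. u i)"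
    using assms unfolding is_decomp_def by blast
  then show thesis using that by (blast dest: ex1_implies_ex)
qed

lemma is_decomp_unique:
  assumes "is_decomp scale src tgt V F n N" "v \<in> V z"
    and "\<forall>i<n. u i \<in> N i z" "v = (\<Sum>i<n. u i)" "\<forall>i<n. u' i \<in> N i z" "v = (\<Sum>i<n. u' i)"
  shows "\<forall>i<n. u i = u' i"
proof -
  let ?cut = "\<lambda>u i. if i < n then u i else 0"
  let ?P = "\<lambda>w. (\<forall>i<n. w i \<in> N i z) \<and> (\<forall>i\<ge>n. w i = 0) \<and> v = (\<Sum>i<n. w i)"
  have "\<exists>!w. ?P w" using assms(1,2) unfolding is_decomp_def by blast
  moreover have "?P (?cut u)" "?P (?cut u')" using assms(3-6) by simp_all
  ultimately have "?cut u = ?cut u'"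
    using the1_equality[of ?P "?cut u"] the1_equality[of ?P "?cut u'"] by simp
  show ?thesis
  proof (intro allI impI)
    fix i assume "i < n"
    then show "u i = u' i" using fun_cong[OF \<open>?cut u = ?cut u'\<close>, of i] by simp
  qed
qed

lemma is_decomp_sum_eq_0:
  assumes dec: "is_decomp scale src tgt V F n N" and "subspace (V z)"
    and u: "\<forall>i<n. u i \<in> N i z" "(\<Sum>i<n. u i) = 0"
  shows "\<forall>i<n. u i = 0"
proof -
  have "\<forall>i<n. 0 \<in> N i z"
    using is_decomp_summand(1)[OF dec] subspace_0 by blast
  then show ?thesis
    using is_decomp_unique[OF dec subspace_0[OF \<open>subspace (V z)\<close>], of u "\<lambda>_. 0"] u by simp
qed

lemma is_decomp_summands_disjoint:
  assumes dec: "is_decomp scale src tgt V F n N" and ij: "i < n" "j < n" "i \<noteq> j"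
    and w: "w \<in> N i z" "w \<in> N j z"
  shows "w = 0"
proof -
  have "w \<in> V z" using is_decomp_summand(2)[OF dec ij(1)] w(1) by blast
  let ?at = "\<lambda>m k. if k = m then w else 0"
  have "\<forall>k<n. ?at i k = ?at j k"
    using is_decomp_summand(1)[OF dec] \<open>w \<in> V z\<close> w ij
    by (intro is_decomp_unique[OF dec, of w z]) (auto simp: subspace_0 if_distrib sum.delta)
  then show ?thesis using ij by auto
qed

lemma independent_UN_direct_sum:
  fixes n :: nat
  assumes ind: "\<And>i. i < n \<Longrightarrow> independent (C i)"
    and sub: "\<And>i. i < n \<Longrightarrow> C i \<subseteq> S i"
    and ssp: "\<And>i. i < n \<Longrightarrow> subspace (S i)"
    and direct: "\<And>u. \<forall>i<n. u i \<in> S i \<Longrightarrow> (\<Sum>i<n. u i) = 0 \<Longrightarrow> \<forall>i<n. u i = 0"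
    and disj: "\<And>i j. i < n \<Longrightarrow> j < n \<Longrightarrow> i \<noteq> j \<Longrightarrow> C i \<inter> C j = {}"
  shows "independent (\<Union>i<n. C i)"
  unfolding independent_explicit_finite_subsets
proof (intro allI impI ballI)
  fix t u v
  assume t: "t \<subseteq> (\<Union>i<n. C i)" and ft: "finite t" and s0: "(\<Sum>v\<in>t. u v *s v) = 0"
    and v: "v \<in> t"
  define w where "w i = (\<Sum>v\<in>t \<inter> C i. u v *s v)" for i
  have t_split: "t = (\<Union>i\<in>{..<n}. t \<inter> C i)" using t by blast
  have "(\<Sum>v\<in>t. u v *s v) = (\<Sum>i<n. w i)"
    unfolding w_def by (subst t_split, rule sum.UNION_disjoint) (use ft disj in auto)
  moreover have "\<forall>i<n. w i \<in> S i"
    unfolding w_def using sub ssp by (auto intro!: subspace_sum subspace_scale)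
  ultimately have "\<forall>i<n. w i = 0" using direct s0 by simp
  moreover obtain i where i: "i < n" "v \<in> C i" using t v by blast
  ultimately have "(\<Sum>v\<in>t \<inter> C i. u v *s v) = 0" unfolding w_def by blast
  then have "\<forall>v\<in>t \<inter> C i. u v = 0"
    using ind[OF i(1)] ft unfolding independent_explicit_finite_subsets by blast
  then show "u v = 0" using i v by blast
qed

end

section \<open>Maps of maximal rank and the parent map\<close>

definition max_rank ::
    "('k::field \<Rightarrow> 'w::ab_group_add \<Rightarrow> 'w) \<Rightarrow> 'w set \<Rightarrow> 'w set \<Rightarrow> ('w \<Rightarrow> 'w) \<Rightarrow> bool"
  where "max_rank scale S T f \<longleftrightarrow> (\<forall>u\<in>S. f u = 0 \<longrightarrow> u = 0) \<or> T \<subseteq> f ` S"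

lemma inj_or_surj_imp_surj:
  assumes "finite P" "g ` A \<subseteq> P" "inj_on g A \<or> g ` A = P" "card P \<le> card A"
  shows "g ` A = P"
proof (cases "inj_on g A")
  case True
  then have "card (g ` A) = card P"
    using card_image[of g A] card_mono[OF assms(1,2)] assms(4) by simp
  then show ?thesis using card_subset_eq[OF assms(1,2)] by blast
qed (use assms(3) in blast)

lemma inj_or_surj_imp_inj:
  assumes "finite A" "inj_on g A \<or> g ` A = P" "card A \<le> card P"
  shows "inj_on g A"
proof (rule ccontr)
  assume not_inj: "\<not> inj_on g A"
  then have "card (g ` A) < card A"
    using card_image_le[OF assms(1), of g] eq_card_imp_inj_on[OF assms(1), of g] by linarith
  then show False using assms(2,3) not_inj by auto
qed

lemma joined_commute: "joined scale src tgt F B p q \<longleftrightarrow> joined scale src tgt F B q p"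
  unfolding joined_def by blast

lemma parent_map_exists:
  assumes parent: "\<forall>c\<in>B z. \<exists>!c'. c' \<in> B y \<and> joined scale src tgt F B (z, c) (y, c')"
  obtains g where "g ` B z \<subseteq> B y"
    "\<And>c c'. c \<in> B z \<Longrightarrow> c' \<in> B y \<Longrightarrow>
      joined scale src tgt F B (y, c') (z, c) \<longleftrightarrow> c' = g c"
proof
  define g where "g c = (THE c'. c' \<in> B y \<and> joined scale src tgt F B (z, c) (y, c'))" for c
  have g_parent: "g c \<in> B y \<and> joined scale src tgt F B (z, c) (y, g c)" if "c \<in> B z" for c
    unfolding g_def using theI'[OF parent[rule_format, OF that]] .
  then show "g ` B z \<subseteq> B y" by blast
  fix c c' assume c: "c \<in> B z" and c': "c' \<in> B y"
  show "joined scale src tgt F B (y, c') (z, c) \<longleftrightarrow> c' = g c"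
  proof
    assume "joined scale src tgt F B (y, c') (z, c)"
    then have "c' \<in> B y \<and> joined scale src tgt F B (z, c) (y, c')"
      using c' joined_commute[of scale src tgt F B "(y, c')" "(z, c)"] by simp
    then have "g c = c'" unfolding g_def by (rule the1_equality[OF parent[rule_format, OF c]])
    then show "c' = g c" by simp
  next
    assume "c' = g c"
    then show "joined scale src tgt F B (y, c') (z, c)"
      using g_parent[OF c] joined_commute[of scale src tgt F B "(y, c')" "(z, c)"] by simp
  qed
qed

lemma joined_along_arrow:
  assumes tree: "tree_quiver src tgt" and \<alpha>: "src \<alpha> = s" "tgt \<alpha> = t"
  shows "joined scale src tgt F B (s, p) (t, q) \<longleftrightarrow>
           p \<in> B s \<and> q \<in> B t \<and> module.representation scale (B t) (F \<alpha> p) q \<noteq> 0"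
proof -
  have loopless: "src \<alpha> \<noteq> tgt \<alpha>"
    and simple: "\<And>\<beta>. \<beta> \<noteq> \<alpha> \<Longrightarrow> {src \<beta>, tgt \<beta>} \<noteq> {src \<alpha>, tgt \<alpha>}"
    using tree unfolding tree_quiver_def by blast+
  have unique: "\<beta> = \<alpha>" if "src \<beta> = s \<and> tgt \<beta> = t \<or> src \<beta> = t \<and> tgt \<beta> = s" for \<beta>
  proof (rule ccontr)
    assume "\<beta> \<noteq> \<alpha>"
    moreover have "{src \<beta>, tgt \<beta>} = {src \<alpha>, tgt \<alpha>}"
      using that \<alpha> by (elim disjE) (simp_all add: insert_commute)
    ultimately show False using simple by blast
  qed
  have "coeff_arrow scale src tgt F B \<beta> (s, p) (t, q) \<longleftrightarrow>
      \<beta> = \<alpha> \<and> p \<in> B s \<and> q \<in> B t \<and> module.representation scale (B t) (F \<alpha> p) q \<noteq> 0" for \<beta>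
  proof
    assume arrow: "coeff_arrow scale src tgt F B \<beta> (s, p) (t, q)"
    then have "\<beta> = \<alpha>" using unique unfolding coeff_arrow_def by simp
    then show "\<beta> = \<alpha> \<and> p \<in> B s \<and> q \<in> B t \<and> module.representation scale (B t) (F \<alpha> p) q \<noteq> 0"
      using arrow \<alpha> unfolding coeff_arrow_def by simp
  qed (use \<alpha> in \<open>simp add: coeff_arrow_def\<close>)
  moreover have "\<not> coeff_arrow scale src tgt F B \<beta> (t, q) (s, p)" for \<beta>
  proof
    assume "coeff_arrow scale src tgt F B \<beta> (t, q) (s, p)"
    then have "src \<beta> = t" "tgt \<beta> = s" unfolding coeff_arrow_def by simp_all
    moreover from this have "\<beta> = \<alpha>" using unique by simp
    ultimately show False using \<alpha> loopless by simp
  qed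
  ultimately show ?thesis unfolding joined_def by blast
qed

context vector_space
begin

text \<open>If \<open>F \<alpha>\<close> had a kernel vector \<open>k\<close> and missed a vector \<open>c\<close>, the family
  sending \<open>k\<close> to \<open>c\<close> along \<open>\<alpha>\<close> and vanishing elsewhere would not be of the form
  \<open>h (tgt \<alpha>) \<circ> F \<alpha> - F \<alpha> \<circ> h (src \<alpha>)\<close>: evaluated at \<open>k\<close> that difference
  lies in the image of \<open>F \<alpha>\<close>.\<close>
lemma ext1_zero_imp_max_rank:
  assumes rep: "is_rep scale src tgt V F" and ext: "ext1_zero scale src tgt V F"
  shows "max_rank scale (V (src \<alpha>)) (V (tgt \<alpha>)) (F \<alpha>)"
proof (rule ccontr)
  assume "\<not> ?thesis"
  then obtain k c where k: "k \<in> V (src \<alpha>)" "F \<alpha> k = 0" "k \<noteq> 0"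
    and c: "c \<in> V (tgt \<alpha>)" "c \<notin> F \<alpha> ` V (src \<alpha>)"
    unfolding max_rank_def by blast
  have ss: "\<And>z. subspace (V z)" using rep unfolding is_rep_def fin_dim_subspace_def by blast
  have F: "lin_on scale (V (src \<alpha>)) (V (tgt \<alpha>)) (F \<alpha>)" using rep unfolding is_rep_def by blast
  obtain E where E: "k \<in> E" "E \<subseteq> V (src \<alpha>)" "independent E" "V (src \<alpha>) \<subseteq> span E"
    using maximal_independent_subset_extend[of "{k}" "V (src \<alpha>)"] k by auto
  define g where "g \<beta> = (if \<beta> = \<alpha> then (\<lambda>v. representation E v k *s c) else (\<lambda>v. 0))"
    for \<beta>
  have coeff_k: "representation E (u + v) k = representation E u k + representation E v k"
    "representation E (a *s u) k = a * representation E u k"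
    if "u \<in> V (src \<alpha>)" "v \<in> V (src \<alpha>)" for u v a
  proof -
    have "u \<in> span E" "v \<in> span E" using that E(4) by auto
    then show "representation E (u + v) k = representation E u k + representation E v k"
      "representation E (a *s u) k = a * representation E u k"
      by (simp_all add: representation_add[OF E(3)] representation_scale[OF E(3)])
  qed
  have "lin_on scale (V (src \<beta>)) (V (tgt \<beta>)) (g \<beta>)" for \<beta>
    using ss[of "tgt \<beta>"] c(1) coeff_k unfolding lin_on_def g_def
    by (auto simp: subspace_0 subspace_scale scale_left_distrib)
  then obtain h where h: "\<forall>z. lin_on scale (V z) (V z) (h z)"
    "\<forall>\<beta>. \<forall>v\<in>V (src \<beta>). g \<beta> v = h (tgt \<beta>) (F \<beta> v) - F \<beta> (h (src \<beta>) v)"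
    using ext unfolding ext1_zero_def by blast
  have hk: "h (src \<alpha>) k \<in> V (src \<alpha>)" using h(1) k(1) unfolding lin_on_def by blast
  have "c = - F \<alpha> (h (src \<alpha>) k)"
    using h(2)[rule_format, OF k(1)] k(2) lin_on_zero[OF h(1)[rule_format] ss]
    by (simp add: g_def representation_basis[OF E(3,1)])
  also have "\<dots> = F \<alpha> ((-1) *s h (src \<alpha>) k)"
    using F hk unfolding lin_on_def by (metis scale_minus_left scale_one)
  finally show False using c(2) hk ss subspace_scale by blast
qed

lemma parent_map_inj_or_surj_if_max_rank_down:
  assumes P: "independent P" and Q: "independent Q"
    and f: "lin_on scale (span P) (span Q) f" and rank: "max_rank scale (span P) (span Q) f"
    and g: "g ` Q \<subseteq> P"
    and coeff: "\<And>p q. p \<in> P \<Longrightarrow> q \<in> Q \<Longrightarrow> representation Q (f p) q \<noteq> 0 \<longleftrightarrow> p = g q"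
  shows "inj_on g Q \<or> g ` Q = P"
proof (rule ccontr)
  assume "\<not> ?thesis"
  then obtain q1 q2 p where q: "q1 \<in> Q" "q2 \<in> Q" "q1 \<noteq> q2" "g q1 = g q2"
    and p: "p \<in> P" "p \<notin> g ` Q"
    using g unfolding inj_on_def by blast
  have fP: "f p' \<in> span Q" if "p' \<in> P" for p'
    using f span_base[OF that] unfolding lin_on_def by blast
  have "f p = 0"
    using coeff[OF p(1)] p(2) by (intro eq_0_if_representation_eq_0[OF Q fP[OF p(1)]]) blast
  moreover have "p \<noteq> 0" using P p(1) dependent_zero by blast
  ultimately have surj: "span Q \<subseteq> f ` span P"
    using rank span_base[OF p(1)] unfolding max_rank_def by blast
  txt \<open>Both \<open>q1\<close> and \<open>q2\<close> occur only in \<open>f (g q1)\<close>, so the image of \<open>f\<close> satisfies a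
    linear relation between their coefficients that \<open>q1\<close> violates.\<close>
  define a where "a = representation Q (f (g q1)) q2"
  define c where "c = representation Q (f (g q1)) q1"
  let ?U = "{w \<in> span Q. a * representation Q w q1 = c * representation Q w q2}"
  have "f ` P \<subseteq> ?U"
  proof (rule image_subsetI)
    fix p' assume "p' \<in> P"
    then show "f p' \<in> ?U"
      using coeff[of p' q1] coeff[of p' q2] q fP unfolding a_def c_def by (cases "p' = g q1") auto
  qed
  then have "f ` span P \<subseteq> ?U"
    by (rule lin_on_image_subset_subspace[OF f subspace_representation_relation[OF Q]])
  then have "q1 \<in> ?U" using surj span_base[OF q(1)] by blast
  then have "a = 0" using q(3) by (simp add: representation_basis[OF Q q(1)])
  moreover have "a \<noteq> 0" using coeff[of "g q1" q2] g q unfolding a_def by auto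
  ultimately show False by simp
qed

lemma parent_map_inj_or_surj_if_max_rank_up:
  assumes P: "independent P" and Q: "independent Q"
    and f: "lin_on scale (span Q) (span P) f" and rank: "max_rank scale (span Q) (span P) f"
    and g: "g ` Q \<subseteq> P"
    and coeff: "\<And>p q. p \<in> P \<Longrightarrow> q \<in> Q \<Longrightarrow> representation P (f q) p \<noteq> 0 \<longleftrightarrow> p = g q"
  shows "inj_on g Q \<or> g ` Q = P"
proof (rule ccontr)
  assume "\<not> ?thesis"
  then obtain q1 q2 p where q: "q1 \<in> Q" "q2 \<in> Q" "q1 \<noteq> q2" "g q1 = g q2"
    and p: "p \<in> P" "p \<notin> g ` Q"
    using g unfolding inj_on_def by blast
  have fQ: "f u \<in> span P" if "u \<in> span Q" for u
    using f that unfolding lin_on_def by blast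
  let ?U = "{w \<in> span P. 1 * representation P w p = 0 * representation P w p}"
  have "f ` Q \<subseteq> ?U"
    using coeff[OF p(1)] p(2) fQ[OF span_base] by auto
  then have "f ` span Q \<subseteq> ?U"
    by (rule lin_on_image_subset_subspace[OF f subspace_representation_relation[OF P]])
  moreover have "p \<notin> ?U" by (simp add: representation_basis[OF P p(1)])
  ultimately have "p \<notin> f ` span Q" by blast
  then have inj: "\<forall>u\<in>span Q. f u = 0 \<longrightarrow> u = 0"
    using rank span_base[OF p(1)] unfolding max_rank_def by blast
  txt \<open>Both \<open>f q1\<close> and \<open>f q2\<close> are multiples of the common parent, so a combination of
    \<open>q1\<close> and \<open>q2\<close> lies in the kernel.\<close>
  define l1 where "l1 = representation P (f q1) (g q1)"
  define l2 where "l2 = representation P (f q2) (g q1)"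
  have fq: "f q1 = l1 *s g q1" "f q2 = l2 *s g q1"
    using q g coeff fQ[OF span_base] unfolding l1_def l2_def
    by (auto intro!: eq_scale_if_representation_supported[OF P])
  have sq: "q1 \<in> span Q" "q2 \<in> span Q" using q span_base by auto
  have lin_add: "\<And>u v. u \<in> span Q \<Longrightarrow> v \<in> span Q \<Longrightarrow> f (u + v) = f u + f v"
    and lin_scale: "\<And>r u. u \<in> span Q \<Longrightarrow> f (r *s u) = r *s f u"
    using f unfolding lin_on_def by blast+
  have "f (l2 *s q1 + (- l1) *s q2) = l2 *s f q1 + (- l1) *s f q2"
    by (simp only: lin_add[OF span_scale[OF sq(1)] span_scale[OF sq(2)]] lin_scale sq)
  also have "\<dots> = 0" by (simp add: fq mult.commute)
  finally have "f (l2 *s q1 + (- l1) *s q2) = 0" .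
  moreover have "l2 *s q1 + (- l1) *s q2 \<in> span Q" using sq by (intro span_add span_scale)
  ultimately have "l2 *s q1 + (- l1) *s q2 = 0" using inj by blast
  then have "representation Q (l2 *s q1 + (- l1) *s q2) q1 = 0"
    by (simp add: representation_zero)
  moreover have "l2 \<noteq> 0" using coeff[of "g q1" q2] g q unfolding l2_def by auto
  ultimately show False
    using sq q(3)
    by (simp add: representation_diff[OF Q] representation_scale[OF Q] span_scale
        representation_basis[OF Q q(1)] representation_basis[OF Q q(2)])
qed

lemma parent_map_inj_or_surj:
  assumes tree: "tree_quiver src tgt" and rep: "is_rep scale src tgt V F"
    and ext: "ext1_zero scale src tgt V F" and adj: "adj src tgt y z"
    and B: "\<And>t. independent (B t)" "\<And>t. span (B t) = V t"
    and g: "g ` B z \<subseteq> B y"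
      "\<And>c c'. c \<in> B z \<Longrightarrow> c' \<in> B y \<Longrightarrow>
        joined scale src tgt F B (y, c') (z, c) \<longleftrightarrow> c' = g c"
  shows "inj_on g (B z) \<or> g ` B z = B y"
proof -
  obtain \<alpha> where \<alpha>: "src \<alpha> = y \<and> tgt \<alpha> = z \<or> src \<alpha> = z \<and> tgt \<alpha> = y"
    using adj unfolding adj_def by blast
  have lin: "lin_on scale (span (B (src \<alpha>))) (span (B (tgt \<alpha>))) (F \<alpha>)"
    using rep unfolding B(2) is_rep_def by blast
  have rank: "max_rank scale (span (B (src \<alpha>))) (span (B (tgt \<alpha>))) (F \<alpha>)"
    unfolding B(2) by (rule ext1_zero_imp_max_rank[OF rep ext])
  from \<alpha> show ?thesis
  proof
    assume "src \<alpha> = y \<and> tgt \<alpha> = z"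
    moreover have "representation (B z) (F \<alpha> p) q \<noteq> 0 \<longleftrightarrow> p = g q"
      if "p \<in> B y" "q \<in> B z" and "src \<alpha> = y" "tgt \<alpha> = z" for p q
      using g(2)[OF that(2,1)] that(1,2)
        joined_along_arrow[OF tree that(3,4), where scale = scale and F = F and B = B]
      by simp
    ultimately show ?thesis
      using parent_map_inj_or_surj_if_max_rank_down[OF B(1) B(1) _ _ g(1)] lin rank by simp
  next
    assume "src \<alpha> = z \<and> tgt \<alpha> = y"
    moreover have "representation (B y) (F \<alpha> q) p \<noteq> 0 \<longleftrightarrow> p = g q"
      if "p \<in> B y" "q \<in> B z" and "src \<alpha> = z" "tgt \<alpha> = y" for p q
      using g(2)[OF that(2,1)] joined_commute[of scale src tgt F B "(y, p)" "(z, q)"]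
        joined_along_arrow[OF tree that(3,4), where scale = scale and F = F and B = B] that(1,2)
      by simp
    ultimately show ?thesis
      using parent_map_inj_or_surj_if_max_rank_up[OF B(1) B(1) _ _ g(1)] lin rank by simp
  qed
qed

end

section \<open>Invariants of radiation bases\<close>

definition basis_family ::
    "('k::field \<Rightarrow> 'w::ab_group_add \<Rightarrow> 'w) \<Rightarrow> ('v \<Rightarrow> 'w set) \<Rightarrow> ('v \<Rightarrow> 'w set) \<Rightarrow> bool"
  where "basis_family scale V B \<longleftrightarrow>
    (\<forall>z. B z \<subseteq> V z \<and> \<not> module.dependent scale (B z) \<and> V z \<subseteq> module.span scale (B z))"

text \<open>Part of the induction invariant only: it keeps the basis of a summand, which vanishes at
  the root, on the far side of the neighbour \<open>y i\<close>, so that distances from the root can be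
  computed inside the summand.\<close>
definition connected_support ::
    "('a \<Rightarrow> 'v) \<Rightarrow> ('a \<Rightarrow> 'v) \<Rightarrow> 'v \<Rightarrow> ('v \<Rightarrow> 'w set) \<Rightarrow> bool"
  where "connected_support src tgt x B \<longleftrightarrow>
    (\<forall>v. B v \<noteq> {} \<longrightarrow> (\<exists>p. walk src tgt p x v \<and> (\<forall>w\<in>set p. B w \<noteq> {})))"

definition unique_parents :: "('k::field \<Rightarrow> 'w::ab_group_add \<Rightarrow> 'w) \<Rightarrow> ('a \<Rightarrow> 'v)
    \<Rightarrow> ('a \<Rightarrow> 'v) \<Rightarrow> ('a \<Rightarrow> 'w \<Rightarrow> 'w) \<Rightarrow> 'v \<Rightarrow> ('v \<Rightarrow> 'w set) \<Rightarrow> bool"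
  where "unique_parents scale src tgt F x B \<longleftrightarrow>
    (\<forall>y z c. adj src tgt y z \<longrightarrow> dist_q src tgt x y + 1 = dist_q src tgt x z \<longrightarrow> c \<in> B z \<longrightarrow>
       (\<exists>!c'. c' \<in> B y \<and> joined scale src tgt F B (z, c) (y, c')))"

lemma (in vector_space) basis_familyD:
  assumes rep: "is_rep scale src tgt V F" and B: "basis_family scale V B"
  shows "independent (B t)" "span (B t) = V t" "finite (B t)" "dim (V t) = card (B t)"
proof -
  have sub: "B t \<subseteq> V t" and ind: "independent (B t)" and sp: "V t \<subseteq> span (B t)"
    using B unfolding basis_family_def by blast+
  obtain S where S: "finite S" "span S = V t" "subspace (V t)"
    using rep unfolding is_rep_def fin_dim_subspace_def by blast
  show "independent (B t)" by (fact ind)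
  show "span (B t) = V t" using span_subspace[OF sub sp S(3)] .
  show "finite (B t)" using independent_span_bound[OF S(1) ind] sub S(2) by blast
  show "dim (V t) = card (B t)" using basis_card_eq_dim[OF sub sp ind] by simp
qed

lemma (in vector_space) rad_basis_invariants_simple:
  assumes "dim (V x) = 1" "\<forall>z. z \<noteq> x \<longrightarrow> V z = {0}" "b \<in> V x" "b \<noteq> 0"
  shows "basis_family scale V (\<lambda>z. if z = x then {b} else {}) \<and>
    connected_support src tgt x (\<lambda>z. if z = x then {b} else {}) \<and>
    unique_parents scale src tgt F x (\<lambda>z. if z = x then {b} else {})"
proof (intro conjI)
  show "basis_family scale V (\<lambda>z. if z = x then {b} else {})"
    unfolding basis_family_def
    using assms(2-4) subset_span_singleton_if_dim_1[OF assms(1,3,4)]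
    by (auto simp: independent_empty span_zero dependent_single)
  show "connected_support src tgt x (\<lambda>z. if z = x then {b} else {})"
    unfolding connected_support_def by (auto intro!: exI[of _ "[x]"] simp: walk_def)
  show "unique_parents scale src tgt F x (\<lambda>z. if z = x then {b} else {})"
    unfolding unique_parents_def by auto
qed

locale radiation_step = vector_space scale
  for scale :: "'k::field \<Rightarrow> 'w::ab_group_add \<Rightarrow> 'w" +
  fixes src tgt :: "'a \<Rightarrow> 'v" and V :: "'v \<Rightarrow> 'w set" and F :: "'a \<Rightarrow> 'w \<Rightarrow> 'w"
    and x :: 'v and b :: 'w and n :: nat and N :: "nat \<Rightarrow> 'v \<Rightarrow> 'w set"
    and y :: "nat \<Rightarrow> 'v" and bb :: "nat \<Rightarrow> 'w" and BB :: "nat \<Rightarrow> 'v \<Rightarrow> 'w set"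
  assumes tree: "tree_quiver src tgt"
    and subspace_V: "\<And>z. subspace (V z)"
    and dim_root: "dim (V x) = 1" and root_in_V: "b \<in> V x" and root_nonzero: "b \<noteq> 0"
    and decomp: "is_decomp scale src tgt (restr_sp V x) (restr_map src tgt F x) n N"
    and adj_root: "\<And>i. i < n \<Longrightarrow> adj src tgt x (y i)"
    and arrow_out: "\<And>i \<alpha>. i < n \<Longrightarrow> src \<alpha> = x \<Longrightarrow> tgt \<alpha> = y i \<Longrightarrow>
      \<exists>u. (\<forall>j<n. u j \<in> N j (y i)) \<and> F \<alpha> b = (\<Sum>j<n. u j) \<and> bb i = u i"
    and arrow_in: "\<And>i \<alpha>. i < n \<Longrightarrow> src \<alpha> = y i \<Longrightarrow> tgt \<alpha> = x \<Longrightarrow>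
      bb i \<in> N i (y i) \<and> F \<alpha> (bb i) = b"
    and summand_basis: "\<And>i. i < n \<Longrightarrow> basis_family scale (N i) (BB i)"
    and summand_root: "\<And>i. i < n \<Longrightarrow> BB i (y i) = {bb i}"
    and summand_connected: "\<And>i. i < n \<Longrightarrow> connected_support src tgt (y i) (BB i)"
    and summand_parents:
      "\<And>i. i < n \<Longrightarrow> unique_parents scale src tgt (restr_map src tgt F x) (y i) (BB i)"
begin

abbreviation Fx :: "'a \<Rightarrow> 'w \<Rightarrow> 'w" where "Fx \<equiv> restr_map src tgt F x"

definition glued_basis :: "'v \<Rightarrow> 'w set"
  where "glued_basis z = (if z = x then {b} else {}) \<union> (\<Union>i<n. BB i z)"

lemma summand_subspace: "i < n \<Longrightarrow> subspace (N i z)"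
  and summand_subset: "i < n \<Longrightarrow> z \<noteq> x \<Longrightarrow> N i z \<subseteq> V z"
  and summand_at_root: "i < n \<Longrightarrow> N i x = {0}"
  and summand_closed: "i < n \<Longrightarrow> Fx \<alpha> ` N i (src \<alpha>) \<subseteq> N i (tgt \<alpha>)"
  using is_decomp_summand[OF decomp] subspace_0 by (fastforce simp: restr_sp_def)+

lemma summand_basis_subset: "i < n \<Longrightarrow> BB i z \<subseteq> N i z"
  and summand_basis_independent: "i < n \<Longrightarrow> independent (BB i z)"
  and summand_basis_spans: "i < n \<Longrightarrow> N i z \<subseteq> span (BB i z)"
  using summand_basis unfolding basis_family_def by blast+

lemma summand_basis_nonzero: "i < n \<Longrightarrow> c \<in> BB i z \<Longrightarrow> c \<noteq> 0"
  using summand_basis_independent dependent_zero by blast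

lemma summand_basis_at_root: "i < n \<Longrightarrow> BB i x = {}"
  using summand_basis_subset summand_at_root summand_basis_nonzero by blast

lemma summand_bases_disjoint: "i < n \<Longrightarrow> j < n \<Longrightarrow> c \<in> BB i z \<Longrightarrow> c \<in> BB j z \<Longrightarrow> i = j"
  using is_decomp_summands_disjoint[OF decomp] summand_basis_subset summand_basis_nonzero by blast

lemma glued_basis_root: "glued_basis x = {b}"
  using summand_basis_at_root by (simp add: glued_basis_def)

lemma glued_basis_away: "z \<noteq> x \<Longrightarrow> glued_basis z = (\<Union>i<n. BB i z)"
  by (simp add: glued_basis_def)

lemma summand_basis_subset_glued: "i < n \<Longrightarrow> BB i z \<subseteq> glued_basis z"
  by (auto simp: glued_basis_def)

lemma basis_family_glued: "basis_family scale V glued_basis"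
  unfolding basis_family_def
proof (intro allI conjI)
  fix z
  show "glued_basis z \<subseteq> V z"
  proof (cases "z = x")
    case False
    then have "BB i z \<subseteq> V z" if "i < n" for i
      using summand_basis_subset[OF that] summand_subset[OF that] by blast
    then show ?thesis unfolding glued_basis_away[OF False] by blast
  qed (simp add: glued_basis_root root_in_V)
  show "independent (glued_basis z)"
  proof (cases "z = x")
    case False
    have "\<forall>i<n. u i = 0" if "\<forall>i<n. u i \<in> N i z" "(\<Sum>i<n. u i) = 0" for u
      using is_decomp_sum_eq_0[OF decomp _ that] subspace_V False by (simp add: restr_sp_def)
    then show ?thesis
      unfolding glued_basis_away[OF False] using summand_bases_disjoint
      by (intro independent_UN_direct_sum[where S = "\<lambda>i. N i z"]
          summand_basis_independent summand_basis_subset summand_subspace) blast+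
  qed (simp add: glued_basis_root root_nonzero dependent_single)
  show "V z \<subseteq> span (glued_basis z)"
  proof (cases "z = x")
    case True
    then show ?thesis
      using subset_span_singleton_if_dim_1[OF dim_root root_in_V root_nonzero]
      by (simp add: glued_basis_root)
  next
    case False
    show ?thesis
    proof
      fix v assume "v \<in> V z"
      then have "v \<in> restr_sp V x z" using False by (simp add: restr_sp_def)
      then obtain u where u: "\<forall>i<n. u i \<in> N i z" "v = (\<Sum>i<n. u i)"
        by (rule is_decomp_exists[OF decomp])
      have "u i \<in> span (glued_basis z)" if "i < n" for i
        using u(1) that summand_basis_spans span_mono[OF summand_basis_subset_glued] by blast
      then show "v \<in> span (glued_basis z)" unfolding u(2) by (intro span_sum) auto
    qed
  qed
qed

lemma glued_basis_independent: "independent (glued_basis z)"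
  using basis_family_glued unfolding basis_family_def by blast

lemma connected_support_glued: "connected_support src tgt x glued_basis"
  unfolding connected_support_def
proof (intro allI impI)
  fix v assume "glued_basis v \<noteq> {}"
  show "\<exists>p. walk src tgt p x v \<and> (\<forall>w\<in>set p. glued_basis w \<noteq> {})"
  proof (cases "v = x")
    case True
    then show ?thesis by (intro exI[of _ "[x]"]) (simp add: walk_def glued_basis_root)
  next
    case False
    then obtain i where i: "i < n" "BB i v \<noteq> {}"
      using \<open>glued_basis v \<noteq> {}\<close> by (auto simp: glued_basis_away)
    then obtain p where p: "walk src tgt p (y i) v" "\<forall>w\<in>set p. BB i w \<noteq> {}"
      using summand_connected unfolding connected_support_def by blast
    have "glued_basis w \<noteq> {}" if "w \<in> set (x # p)" for w
    proof (cases "w = x")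
      case False
      then have "BB i w \<noteq> {}" using that p(2) by simp
      then show ?thesis using summand_basis_subset_glued[OF i(1), of w] by blast
    qed (simp add: glued_basis_root)
    then show ?thesis using walk_ConsI[OF adj_root[OF i(1)] p(1)] by blast
  qed
qed

lemma representation_glued_basis:
  assumes "i < n" "w \<in> N i z"
  shows "representation (glued_basis z) w = representation (BB i z) w"
  using assms summand_basis_spans
  by (intro representation_extend[OF glued_basis_independent _ summand_basis_subset_glued]) blast+

lemma joined_root_edge:
  assumes i: "i < n"
  shows "joined scale src tgt F glued_basis (y i, bb i) (x, b)"
proof -
  have bb: "bb i \<in> glued_basis (y i)"
    using summand_root[OF i] summand_basis_subset_glued[OF i] by blast
  obtain \<alpha> where "src \<alpha> = x \<and> tgt \<alpha> = y i \<or> src \<alpha> = y i \<and> tgt \<alpha> = x"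
    using adj_root[OF i] unfolding adj_def by blast
  then show ?thesis
  proof
    assume \<alpha>: "src \<alpha> = x \<and> tgt \<alpha> = y i"
    then obtain u where u: "\<forall>j<n. u j \<in> N j (y i)" "F \<alpha> b = (\<Sum>j<n. u j)" "bb i = u i"
      using arrow_out[OF i] by blast
    txt \<open>Only the component of \<open>F \<alpha> b\<close> in the \<open>i\<close>-th summand involves \<open>bb i\<close>.\<close>
    have coeff: "representation (glued_basis (y i)) (u j) (bb i) = (if j = i then 1 else 0)"
      if j: "j < n" for j
    proof (cases "j = i")
      case False
      have "bb i \<notin> BB j (y i)"
        using summand_bases_disjoint[OF i j] summand_root[OF i] False by blast
      then show ?thesis
        using False representation_glued_basis[OF j u(1)[rule_format, OF j]] representation_ne_zero
        by auto
    qed (use u(3) representation_basis[OF glued_basis_independent bb] in simp)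
    have u_span: "u j \<in> span (glued_basis (y i))" if "j \<in> {..<n}" for j
      using u(1) that summand_basis_spans span_mono[OF summand_basis_subset_glued] by blast
    have "representation (glued_basis (y i)) (F \<alpha> b) (bb i) =
        (\<Sum>j<n. representation (glued_basis (y i)) (u j) (bb i))"
      unfolding u(2)
      using representation_sum[OF glued_basis_independent, where I = "{..<n}" and v = u] u_span
      by simp
    also have "\<dots> = (\<Sum>j<n. if j = i then 1 else 0)" using coeff by simp
    also have "\<dots> = 1" using i by simp
    finally have "representation (glued_basis (y i)) (F \<alpha> b) (bb i) = 1" .
    then have "coeff_arrow scale src tgt F glued_basis \<alpha> (x, b) (y i, bb i)"
      using \<alpha> bb glued_basis_root unfolding coeff_arrow_def by simp
    then show ?thesis unfolding joined_def by blast
  next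
    assume \<alpha>: "src \<alpha> = y i \<and> tgt \<alpha> = x"
    then have "coeff_arrow scale src tgt F glued_basis \<alpha> (y i, bb i) (x, b)"
      using arrow_in[OF i] bb glued_basis_root root_nonzero
      by (simp add: coeff_arrow_def dependent_single representation_basis[of "{b}" b])
    then show ?thesis unfolding joined_def by blast
  qed
qed

lemma coeff_arrow_glued_iff:
  assumes i: "i < n" and away: "u \<noteq> x" "w \<noteq> x" and c1: "c1 \<in> BB i u"
  shows "coeff_arrow scale src tgt F glued_basis \<beta> (u, c1) (w, c2) \<longleftrightarrow>
    c2 \<in> BB i w \<and> coeff_arrow scale src tgt Fx (BB i) \<beta> (u, c1) (w, c2)"
proof (cases "src \<beta> = u \<and> tgt \<beta> = w")
  case True
  then have Fx: "Fx \<beta> = F \<beta>" using away by (simp add: restr_map_def)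
  have "c1 \<in> N i (src \<beta>)" using summand_basis_subset[OF i] c1 True by auto
  then have "F \<beta> c1 \<in> N i w" using summand_closed[OF i, of \<beta>] True Fx by auto
  then have rep: "representation (glued_basis w) (F \<beta> c1) = representation (BB i w) (F \<beta> c1)"
    by (rule representation_glued_basis[OF i])
  have "c2 \<in> BB i w" if "representation (BB i w) (F \<beta> c1) c2 \<noteq> 0"
    using that representation_ne_zero by blast
  then show ?thesis
    using True Fx rep c1 summand_basis_subset_glued[OF i, of u] summand_basis_subset_glued[OF i, of w]
    unfolding coeff_arrow_def by auto
qed (auto simp: coeff_arrow_def)

lemma joined_glued_iff:
  assumes i: "i < n" and away: "z \<noteq> x" "z' \<noteq> x" and c: "c \<in> BB i z"
    and c': "c' \<in> glued_basis z'"
  shows "joined scale src tgt F glued_basis (z, c) (z', c') \<longleftrightarrow>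
    c' \<in> BB i z' \<and> joined scale src tgt Fx (BB i) (z, c) (z', c')"
proof -
  obtain j where j: "j < n" "c' \<in> BB j z'" using c' away(2) by (auto simp: glued_basis_away)
  have reverse_arrow: "coeff_arrow scale src tgt F glued_basis \<beta> (z', c') (z, c) \<longleftrightarrow>
      c' \<in> BB i z' \<and> coeff_arrow scale src tgt Fx (BB i) \<beta> (z', c') (z, c)" for \<beta>
  proof (cases "j = i")
    case False
    then have "c \<notin> BB j z" "c' \<notin> BB i z'"
      using summand_bases_disjoint[OF i j(1)] c j(2) by blast+
    then show ?thesis using coeff_arrow_glued_iff[OF j(1) away(2,1) j(2)] by simp
  qed (use coeff_arrow_glued_iff[OF j(1) away(2,1) j(2)] c j(2) in simp)
  show ?thesis
    unfolding joined_def reverse_arrow coeff_arrow_glued_iff[OF i away c] by blast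
qed

lemma unique_parents_glued: "unique_parents scale src tgt F x glued_basis"
  unfolding unique_parents_def
proof (intro allI impI)
  fix z' z c
  assume adj: "adj src tgt z' z" and d: "dist_q src tgt x z' + 1 = dist_q src tgt x z"
    and c: "c \<in> glued_basis z"
  have "z \<noteq> x" using d by auto
  then obtain i where i: "i < n" "c \<in> BB i z" using c by (auto simp: glued_basis_away)
  obtain p where p: "walk src tgt p (y i) z" "\<forall>w\<in>set p. BB i w \<noteq> {}"
    using summand_connected[OF i(1)] i(2) unfolding connected_support_def by blast
  have "x \<notin> set p" using p(2) summand_basis_at_root[OF i(1)] by blast
  then have dz: "dist_q src tgt x z = dist_q src tgt (y i) z + 1"
    using dist_q_through_neighbour[OF tree adj_root[OF i(1)] p(1)] by blast
  show "\<exists>!c'. c' \<in> glued_basis z' \<and> joined scale src tgt F glued_basis (z, c) (z', c')"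
  proof (cases "z' = x")
    case True
    then have "y i = z" using d dz dist_q_eq_0_iff[OF tree] by simp
    then have "c = bb i" using i(2) summand_root[OF i(1)] by blast
    then show ?thesis
      using True joined_root_edge[OF i(1)] joined_commute glued_basis_root \<open>y i = z\<close> by auto
  next
    case False
    have "x \<notin> set (p @ [z'])" using \<open>x \<notin> set p\<close> False by simp
    then have "dist_q src tgt x z' = dist_q src tgt (y i) z' + 1"
      using dist_q_through_neighbour[OF tree adj_root[OF i(1)] walk_snoc[OF p(1) adj_sym[OF adj]]]
      by blast
    then have "dist_q src tgt (y i) z' + 1 = dist_q src tgt (y i) z" using d dz by simp
    then have "\<exists>!c'. c' \<in> BB i z' \<and> joined scale src tgt Fx (BB i) (z, c) (z', c')"
      using summand_parents[OF i(1)] adj i(2) unfolding unique_parents_def by blast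
    moreover have "c' \<in> glued_basis z' \<and> joined scale src tgt F glued_basis (z, c) (z', c') \<longleftrightarrow>
        c' \<in> BB i z' \<and> joined scale src tgt Fx (BB i) (z, c) (z', c')" for c'
      using joined_glued_iff[OF i(1) \<open>z \<noteq> x\<close> False i(2)] summand_basis_subset_glued[OF i(1)]
      by blast
    ultimately show ?thesis by simp
  qed
qed

end

lemma rad_basis_invariants:
  assumes vs: "vector_space scale" and tree: "tree_quiver src tgt"
  shows "rad_basis scale src tgt V F x b B \<Longrightarrow>
    basis_family scale V B \<and> B x = {b} \<and> connected_support src tgt x B \<and>
    unique_parents scale src tgt F x B"
proof (induction rule: rad_basis.induct)
  case (simple V F x b)
  then show ?case using vector_space.rad_basis_invariants_simple[OF vs] by simp
next
  case (step V F x b n N y bb BB)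
  have "radiation_step_axioms scale src tgt V F x b n N y bb BB"
  proof (unfold_locales)
    show "\<And>z. module.subspace scale (V z)"
      using step(1) unfolding indecomposable_def is_rep_def fin_dim_subspace_def by blast
  qed (use tree step in auto)
  then interpret radiation_step scale src tgt V F x b n N y bb BB
    by (intro radiation_step.intro vs)
  show ?case
    using basis_family_glued glued_basis_root connected_support_glued unique_parents_glued
    unfolding glued_basis_def by blast
qed

theorem proposition3:
  fixes scale :: "'k::field \<Rightarrow> 'w::ab_group_add \<Rightarrow> 'w"
    and src tgt :: "'a \<Rightarrow> 'v"
    and V :: "'v \<Rightarrow> 'w set" and F :: "'a \<Rightarrow> 'w \<Rightarrow> 'w"
    and x y z :: 'v and b :: 'w and B :: "'v \<Rightarrow> 'w set"
  assumes vs: "vector_space scale"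
    and lf: "locally_finite_quiver src tgt"
    and tree: "tree_quiver src tgt"
    and rad: "radiation scale src tgt V F x"
    and exc: "exceptional scale src tgt V F"
    and basis: "rad_basis scale src tgt V F x b B"
    and nb: "adj src tgt y z"
    and d: "dist_q src tgt x y + 1 = dist_q src tgt x z"
  shows "(\<forall>c\<in>B z. \<exists>!c'. c' \<in> B y \<and> joined scale src tgt F B (z, c) (y, c')) \<and>
         (vector_space.dim scale (V y) \<le> vector_space.dim scale (V z) \<longrightarrow>
           (\<forall>c'\<in>B y. \<exists>c\<in>B z. joined scale src tgt F B (y, c') (z, c))) \<and>
         (vector_space.dim scale (V y) \<ge> vector_space.dim scale (V z) \<longrightarrow>
           (\<forall>c'\<in>B y. \<forall>c1\<in>B z. \<forall>c2\<in>B z. joined scale src tgt F B (y, c') (z, c1) \<and>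
              joined scale src tgt F B (y, c') (z, c2) \<longrightarrow> c1 = c2))"
proof -
  interpret vector_space scale by (rule vs)
  have rep: "is_rep scale src tgt V F" and ext: "ext1_zero scale src tgt V F"
    using exc unfolding exceptional_def indecomposable_def by blast+
  have "basis_family scale V B" and "unique_parents scale src tgt F x B"
    using rad_basis_invariants[OF vs tree basis] by blast+
  note B = basis_familyD[OF rep this(1)]
  have parent: "\<forall>c\<in>B z. \<exists>!c'. c' \<in> B y \<and> joined scale src tgt F B (z, c) (y, c')"
    using \<open>unique_parents scale src tgt F x B\<close> nb d unfolding unique_parents_def by blast
  obtain g where g: "g ` B z \<subseteq> B y"
    and g_eq: "\<And>c c'. c \<in> B z \<Longrightarrow> c' \<in> B y \<Longrightarrow>
      joined scale src tgt F B (y, c') (z, c) \<longleftrightarrow> c' = g c"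
    using parent_map_exists[OF parent] by blast
  have "inj_on g (B z) \<or> g ` B z = B y"
    by (rule parent_map_inj_or_surj[OF tree rep ext nb B(1,2) g g_eq])
  then have surj: "dim (V y) \<le> dim (V z) \<Longrightarrow> g ` B z = B y"
    and inj: "dim (V z) \<le> dim (V y) \<Longrightarrow> inj_on g (B z)"
    using inj_or_surj_imp_surj[OF B(3) g] inj_or_surj_imp_inj[OF B(3)] B(4) by simp_all
  show ?thesis
  proof (intro conjI impI ballI)
    show "\<exists>!c'. c' \<in> B y \<and> joined scale src tgt F B (z, c) (y, c')" if "c \<in> B z" for c
      by (rule parent[rule_format, OF that])
  next
    fix c' assume "dim (V y) \<le> dim (V z)" "c' \<in> B y"
    then show "\<exists>c\<in>B z. joined scale src tgt F B (y, c') (z, c)" using surj g_eq by blast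
  next
    fix c' c1 c2 assume "dim (V z) \<le> dim (V y)" "c' \<in> B y" "c1 \<in> B z" "c2 \<in> B z"
      "joined scale src tgt F B (y, c') (z, c1) \<and> joined scale src tgt F B (y, c') (z, c2)"
    then show "c1 = c2" using inj g_eq by (metis inj_onD)
  qed
qed

end
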